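(* Let $0<\varepsilon\le 1$. Then there exists an admissible cutoff function $\hat a$ of any type: $(a)$, $(b)$ or $(c)$ such that $0\le \hat a\le 1$, $$\|\hat a^{(k)}\|_\infty\le \tilde{c}(\tilde{c}/\varepsilon)^kk^k(\ln k)^{k(1+\varepsilon)}, \; k\ge 3, \quad\text{and}\quad \|\hat a^{(k)}\|_\infty\le \tilde{c}(\tilde{c}/\varepsilon)^kk^k,\; k=1,2,$$ where $\tilde{c}>1$ is an absolute constant (e.g. $\tilde{c}=88$). Moreover, $\hat a^{(k)}(1)=0$ for $k\ge 1$. Furthermore, there exists an admissible function $\hat a$ of type $(a)$, $(b)$ or $(c)$ such that the derivative estimates $\|\hat a^{(k)}\|_\infty\le \tilde{c}(\tilde{c}/\varepsilon)^kk^k(\ln k)^{k(1+\varepsilon)}$ (for sufficiently large $k$) still hold with the term $(\ln k)^{k(1+\varepsilon)}$ replaced by $(\ln k)^k(\ln\ln k)^{k(1+\varepsilon)}$ or, in general, by a product of the form $$(\ln k)^k \cdots (\underbrace{\ln\cdots\ln}_\ell k)^k (\underbrace{\ln\cdots\ln}_{\ell+1} k)^{k(1+\varepsilon)}$$ with $\ell\ge 1$, for sufficiently large $k$ and with $\tilde{c}$ depending on $\ell$.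
   Context: A function $\hat a\in C^\infty[0,\infty)$ ($\hat a\ge 0$ if needed) is admissible of type $(a)$ if $\operatorname{supp}\hat a\subset[0,2]$ and $\hat a(t)=1$ for $t\in[0,1]$; of type $(b)$ if $\operatorname{supp}\hat a\subset[1/2,2]$; of type $(c)$ if $\operatorname{supp}\hat a\subset[1/2,2]$ and $|\hat a(t)|^2+|\hat a(t/2)|^2=1$ for $t\in[1,2]$. *)

theory Defs
  imports "HOL-Analysis.Analysis"
begin

text \<open>Smoothness on [0,\<infinity>): D is the sequence of (one-sided at 0) derivatives of f,
  with D 0 = f and D (Suc k) the derivative of D k relative to [0,\<infinity>).
  Since [0,\<infinity>) has no isolated points, D k is uniquely determined on [0,\<infinity>).\<close>
definition smooth_derivs_nonneg :: "(real \<Rightarrow> real) \<Rightarrow> (nat \<Rightarrow> real \<Rightarrow> real) \<Rightarrow> bool" where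
  "smooth_derivs_nonneg f D \<longleftrightarrow> (\<forall>x\<ge>0. D 0 x = f x) \<and>
     (\<forall>k. \<forall>x\<ge>0. (D k has_real_derivative D (Suc k) x) (at x within {0..}))"

definition supp_nonneg :: "(real \<Rightarrow> real) \<Rightarrow> real set" where
  "supp_nonneg f = closure {x. 0 \<le> x \<and> f x \<noteq> 0}"

datatype adm_type = TypeA | TypeB | TypeC

definition admissible :: "adm_type \<Rightarrow> (real \<Rightarrow> real) \<Rightarrow> bool" where
  "admissible ty f \<longleftrightarrow> (case ty of
      TypeA \<Rightarrow> supp_nonneg f \<subseteq> {0..2} \<and> (\<forall>t\<in>{0..1}. f t = 1)
    | TypeB \<Rightarrow> supp_nonneg f \<subseteq> {1/2..2}
    | TypeC \<Rightarrow> supp_nonneg f \<subseteq> {1/2..2} \<and> (\<forall>t\<in>{1..2}. \<bar>f t\<bar>^2 + \<bar>f (t/2)\<bar>^2 = 1))"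

end

theory Submission
  imports Defs
begin

text \<open>The cutoff is built from the ramp \<open>max 0 (min 1 x)\<close> by convolving it successively with
  the normalised indicators of \<open>[0, a\<^sub>m]\<close>, where \<open>a\<^sub>m = \<tau>\<^sub>m - \<tau>\<^sub>m\<^sub>+\<^sub>1\<close> for a decreasing
  sequence \<open>\<tau>\<^sub>m \<rightarrow> 0\<close> with \<open>\<tau>\<^sub>0 \<le> 1\<close>. The limit \<open>\<phi>\<close> rises from 0 to 1 on \<open>[0, 2]\<close>, and each
  convolution turns a derivative into a difference quotient, so \<open>\<bar>\<phi>\<^sup>(\<^sup>k\<^sup>)\<bar> \<le> 2\<^sup>k / (a\<^sub>0 \<cdots> a\<^sub>k\<^sub>-\<^sub>1)\<close>.
  With \<open>\<tau>\<^sub>m = (ln\<^sup>l\<^sup>+\<^sup>1 (m + N))\<^sup>-\<^sup>\<epsilon>\<close> the mean value theorem gives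
  \<open>1 / a\<^sub>j \<le> x ln x \<cdots> ln\<^sup>l x (ln\<^sup>l\<^sup>+\<^sup>1 x)\<^sup>1\<^sup>+\<^sup>\<epsilon> / \<epsilon>\<close> at \<open>x = j + 1 + N\<close>, and the product
  over \<open>j < k\<close> is the claimed bound. Type (a) is \<open>1 - \<phi> (2t - 2)\<close>, type (c) is
  \<open>sin (\<pi>/2 \<cdot> (\<phi> (4t - 2) + \<phi> (2t - 2)))\<close>, whose derivatives are controlled through the
  Leibniz rule because the weights above grow like factorials.\<close>

definition moving_average :: "real \<Rightarrow> (real \<Rightarrow> real) \<Rightarrow> real \<Rightarrow> real" where
  "moving_average a g x = integral {x - a..x} g / a"

lemma integrable_on_interval_of_continuous:
  "continuous_on UNIV (g :: real \<Rightarrow> real) \<Longrightarrow> g integrable_on {u..v}"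
  by (rule integrable_continuous_interval, erule continuous_on_subset) simp

lemma moving_average_eq_integral_diff:
  assumes "\<And>u v. g integrable_on {u..v}" "c \<le> x - a" "0 \<le> a"
  shows "moving_average a g x = (integral {c..x} g - integral {c..x - a} g) / a"
proof -
  have "integral {c..x - a} g + integral {x - a..x} g = integral {c..x} g"
    by (rule Henstock_Kurzweil_Integration.integral_combine) (use assms in auto)
  then show ?thesis unfolding moving_average_def by (simp add: algebra_simps)
qed

lemma has_real_derivative_moving_average:
  fixes g :: "real \<Rightarrow> real"
  assumes a: "a > 0" and g: "continuous_on UNIV g"
  shows "(moving_average a g has_real_derivative (g x - g (x - a)) / a) (at x)"
proof -
  define c where "c = x - a - 2"
  define F where "F y = (integral {c..y} g - integral {c..y - a} g) / a" for y
  have F_eq: "F y = moving_average a g y" if "y \<in> ball x 1" for y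
    using that a unfolding F_def
    by (intro moving_average_eq_integral_diff[symmetric] integrable_on_interval_of_continuous[OF g])
       (auto simp: c_def dist_real_def)
  have primitive: "((\<lambda>y. integral {c..y} g) has_real_derivative g t) (at t)" if "t > c" for t
  proof -
    have "((\<lambda>y. integral {c..y} g) has_real_derivative g t) (at t within {c..t + 1})"
      by (rule integral_has_real_derivative) (use that in \<open>auto intro: continuous_on_subset[OF g]\<close>)
    moreover have "t \<in> interior {c..t + 1}" using that by simp
    ultimately show ?thesis by (metis at_within_interior)
  qed
  have "((\<lambda>y. integral {c..y - a} g) has_real_derivative g (x - a) * 1) (at x)"
    by (rule DERIV_chain2[OF primitive]) (use a in \<open>auto intro!: derivative_eq_intros simp: c_def\<close>)
  from DERIV_cdivide[OF DERIV_diff[OF primitive this], of a]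
  have "(F has_real_derivative (g x - g (x - a)) / a) (at x)"
    using a unfolding F_def by (simp add: c_def)
  then show ?thesis
    by (rule has_field_derivative_transform_within_open[of F _ _ "ball x 1"]) (use F_eq in auto)
qed

lemma moving_average_dist_le:
  fixes g :: "real \<Rightarrow> real"
  assumes a: "a > 0" and int: "g integrable_on {x - a..x}"
    and bound: "\<And>y. y \<in> {x - a..x} \<Longrightarrow> \<bar>g y - c\<bar> \<le> B"
  shows "\<bar>moving_average a g x - c\<bar> \<le> B"
proof -
  have int': "(\<lambda>y. g y - c) integrable_on {x - a..x}"
    using integrable_diff[OF int integrable_const_ivl[of c]] by simp
  have "integral {x - a..x} (\<lambda>y. g y - c) = integral {x - a..x} g - a * c"
    using integral_diff[OF int integrable_const_ivl[of c]] a by simp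
  moreover have "integral {x - a..x} (\<lambda>y. g y - c) \<le> integral {x - a..x} (\<lambda>y. B)"
    by (rule integral_le[OF int' integrable_const_ivl]) (use bound in \<open>simp add: abs_le_iff\<close>)
  moreover have "integral {x - a..x} (\<lambda>y. - B) \<le> integral {x - a..x} (\<lambda>y. g y - c)"
    by (rule integral_le[OF integrable_const_ivl int']) (use bound in \<open>force simp: abs_le_iff\<close>)
  ultimately show ?thesis
    using a unfolding moving_average_def by (simp add: abs_le_iff field_simps)
qed

lemma continuous_on_moving_average:
  fixes g :: "real \<Rightarrow> real"
  assumes a: "a > 0" and int: "\<And>u v. g integrable_on {u..v}"
  shows "continuous_on UNIV (moving_average a g)"
proof -
  have "isCont (moving_average a g) x" for x
  proof -
    define c where "c = x - a - 2"
    define G where "G y = integral {c..y} g" for y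
    have G: "continuous_on {c..x + 2} G"
      unfolding G_def by (rule indefinite_integral_continuous_1[OF int])
    have shifted: "(\<lambda>y. y - a) ` ball x 1 \<subseteq> {c..x + 2}" "ball x 1 \<subseteq> {c..x + 2}"
      using a by (auto simp: c_def dist_real_def)
    have "continuous_on (ball x 1) (\<lambda>y. (G y - G (y - a)) / a)"
      using a by (intro continuous_on_divide continuous_on_diff continuous_on_const
          continuous_on_subset[OF G shifted(2)] continuous_on_compose2[OF G _ shifted(1)]
          continuous_intros) auto
    moreover have "(G y - G (y - a)) / a = moving_average a g y" if "y \<in> ball x 1" for y
      using that a unfolding G_def
      by (intro moving_average_eq_integral_diff[symmetric] int) (auto simp: c_def dist_real_def)
    ultimately have "continuous_on (ball x 1) (moving_average a g)"
      by (rule continuous_on_eq)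
    then show ?thesis
      using continuous_on_eq_continuous_at[of "ball x 1" "moving_average a g"] by simp
  qed
  then show ?thesis by (simp add: continuous_at_imp_continuous_on)
qed

lemma moving_average_diff:
  fixes g h :: "real \<Rightarrow> real"
  assumes "g integrable_on {x - a..x}" "h integrable_on {x - a..x}"
  shows "moving_average a g x - moving_average a h x = moving_average a (\<lambda>y. g y - h y) x"
  unfolding moving_average_def using integral_diff[OF assms] by (simp add: diff_divide_distrib)

definition ramp :: "real \<Rightarrow> real" where
  "ramp x = max 0 (min 1 x)"

lemma continuous_on_ramp: "continuous_on UNIV ramp"
  unfolding ramp_def by (intro continuous_intros)

lemma ramp_dist_le: "\<bar>ramp y - ramp x\<bar> \<le> \<bar>y - x\<bar>"
  unfolding ramp_def max_def min_def by (auto simp: abs_if)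


locale averaging_scales =
  fixes \<tau> :: "nat \<Rightarrow> real"
  assumes scale_decreasing: "\<And>m. \<tau> (Suc m) < \<tau> m" and scale_nonneg: "\<And>m. 0 \<le> \<tau> m"
begin

definition window :: "nat \<Rightarrow> real" where
  "window m = \<tau> m - \<tau> (Suc m)"

lemma window_pos: "window m > 0"
  using scale_decreasing[of m] by (simp add: window_def)

lemma sum_window: "(\<Sum>i<n. window (m + i)) = \<tau> m - \<tau> (m + n)"
  by (induction n) (simp_all add: window_def)

lemma summable_window: "summable (\<lambda>i. window (m + i))"
proof (rule summableI_nonneg_bounded[where x = "\<tau> m"])
  show "0 \<le> window (m + n)" for n
    using window_pos[of "m + n"] by simp
  show "(\<Sum>i<n. window (m + i)) \<le> \<tau> m" for n
    using sum_window scale_nonneg[of "m + n"] by simp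
qed

primrec partial_ramp :: "nat \<Rightarrow> nat \<Rightarrow> real \<Rightarrow> real" where
  "partial_ramp 0 m = ramp"
| "partial_ramp (Suc k) m = moving_average (window m) (partial_ramp k (Suc m))"

lemma continuous_on_partial_ramp: "continuous_on UNIV (partial_ramp k m)"
  by (induction k arbitrary: m) (simp_all add: continuous_on_ramp continuous_on_moving_average
      window_pos integrable_on_interval_of_continuous)

lemma integrable_partial_ramp: "partial_ramp k m integrable_on {u..v}"
  by (rule integrable_on_interval_of_continuous[OF continuous_on_partial_ramp])

lemma partial_ramp_bounds: "0 \<le> partial_ramp k m x \<and> partial_ramp k m x \<le> 1"
proof (induction k arbitrary: m x)
  case 0
  then show ?case by (simp add: ramp_def)
next
  case (Suc k)
  have "\<bar>moving_average (window m) (partial_ramp k (Suc m)) x - 1/2\<bar> \<le> 1/2"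
  proof (rule moving_average_dist_le[OF window_pos integrable_partial_ramp])
    fix y
    show "\<bar>partial_ramp k (Suc m) y - 1/2\<bar> \<le> 1/2"
      using Suc.IH[of "Suc m" y] by arith
  qed
  then show ?case unfolding partial_ramp.simps abs_le_iff by linarith
qed

lemma partial_ramp_eq_0: "x \<le> 0 \<Longrightarrow> partial_ramp k m x = 0"
proof (induction k arbitrary: m x)
  case 0
  then show ?case by (simp add: ramp_def)
next
  case (Suc k)
  have "\<bar>moving_average (window m) (partial_ramp k (Suc m)) x - 0\<bar> \<le> 0"
    by (rule moving_average_dist_le[OF window_pos integrable_partial_ramp]) (use Suc in auto)
  then show ?case by simp
qed

lemma partial_ramp_eq_1: "x \<ge> 1 + \<tau> m \<Longrightarrow> partial_ramp k m x = 1"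
proof (induction k arbitrary: m x)
  case 0
  then show ?case using scale_nonneg[of m] by (simp add: ramp_def)
next
  case (Suc k)
  have "\<bar>moving_average (window m) (partial_ramp k (Suc m)) x - 1\<bar> \<le> 0"
    by (rule moving_average_dist_le[OF window_pos integrable_partial_ramp])
      (use Suc in \<open>auto simp: window_def\<close>)
  then show ?case by simp
qed

lemma partial_ramp_Suc_dist: "\<bar>partial_ramp (Suc k) m x - partial_ramp k m x\<bar> \<le> window (m + k)"
proof (induction k arbitrary: m x)
  case 0
  have "\<bar>moving_average (window m) ramp x - ramp x\<bar> \<le> window m"
  proof (rule moving_average_dist_le[OF window_pos integrable_on_interval_of_continuous[OF continuous_on_ramp]])
    fix y
    assume "y \<in> {x - window m..x}"
    then show "\<bar>ramp y - ramp x\<bar> \<le> window m"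
      using ramp_dist_le[of y x] by (simp add: abs_le_iff)
  qed
  then show ?case by simp
next
  case (Suc k)
  have "\<bar>moving_average (window m)
          (\<lambda>y. partial_ramp (Suc k) (Suc m) y - partial_ramp k (Suc m) y) x - 0\<bar> \<le> window (Suc m + k)"
    by (rule moving_average_dist_le[OF window_pos integrable_diff[OF integrable_partial_ramp integrable_partial_ramp]])
      (use Suc.IH[of "Suc m"] in simp)
  then show ?case
    using moving_average_diff[of "partial_ramp (Suc k) (Suc m)" x "window m" "partial_ramp k (Suc m)",
        OF integrable_partial_ramp integrable_partial_ramp] by simp
qed

definition smooth_ramp :: "nat \<Rightarrow> real \<Rightarrow> real" where
  "smooth_ramp m x = lim (\<lambda>k. partial_ramp k m x)"

text \<open>The successive differences are dominated by the summable windows.\<close>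

lemma LIMSEQ_partial_ramp: "(\<lambda>k. partial_ramp k m x) \<longlonglongrightarrow> smooth_ramp m x"
proof -
  define d where "d i = partial_ramp (Suc i) m x - partial_ramp i m x" for i
  have "summable d"
    unfolding d_def
    by (rule summable_comparison_test[OF _ summable_window[of m]]) (use partial_ramp_Suc_dist in auto)
  then have "(\<lambda>k. ramp x + (\<Sum>i<k. d i)) \<longlonglongrightarrow> ramp x + (\<Sum>i. d i)"
    by (intro tendsto_add tendsto_const summable_LIMSEQ)
  moreover have "ramp x + (\<Sum>i<k. d i) = partial_ramp k m x" for k
    unfolding d_def by (subst sum_lessThan_telescope) simp
  ultimately show ?thesis
    unfolding smooth_ramp_def by (simp add: limI)
qed

lemma smooth_ramp_bounds: "0 \<le> smooth_ramp m x \<and> smooth_ramp m x \<le> 1"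
  using LIMSEQ_le_const[OF LIMSEQ_partial_ramp] LIMSEQ_le_const2[OF LIMSEQ_partial_ramp]
    partial_ramp_bounds by meson

lemma smooth_ramp_eq_0: "x \<le> 0 \<Longrightarrow> smooth_ramp m x = 0"
  using LIMSEQ_unique[OF LIMSEQ_partial_ramp[of m x]] by (simp add: partial_ramp_eq_0)

lemma smooth_ramp_eq_1: "x \<ge> 1 + \<tau> m \<Longrightarrow> smooth_ramp m x = 1"
  using LIMSEQ_unique[OF LIMSEQ_partial_ramp[of m x]] by (simp add: partial_ramp_eq_1)

lemma integral_partial_ramp_tendsto:
  "(\<lambda>k. integral {u..v} (partial_ramp k m)) \<longlonglongrightarrow> integral {u..v} (smooth_ramp m)"
  and integrable_smooth_ramp: "smooth_ramp m integrable_on {u..v}"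
  using dominated_convergence[of "\<lambda>k. partial_ramp k m" "{u..v}" "\<lambda>_. 1" "smooth_ramp m"]
    partial_ramp_bounds by (auto intro: integrable_partial_ramp LIMSEQ_partial_ramp)

lemma smooth_ramp_eq_moving_average:
  "smooth_ramp m = moving_average (window m) (smooth_ramp (Suc m))"
proof
  fix x
  have "(\<lambda>k. partial_ramp (Suc k) m x) \<longlonglongrightarrow> moving_average (window m) (smooth_ramp (Suc m)) x"
    unfolding partial_ramp.simps moving_average_def
    using window_pos[of m] by (intro tendsto_divide tendsto_const integral_partial_ramp_tendsto) auto
  moreover have "(\<lambda>k. partial_ramp (Suc k) m x) \<longlonglongrightarrow> smooth_ramp m x"
    using LIMSEQ_partial_ramp LIMSEQ_Suc by blast
  ultimately show "smooth_ramp m x = moving_average (window m) (smooth_ramp (Suc m)) x"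
    using LIMSEQ_unique by blast
qed

lemma continuous_on_smooth_ramp: "continuous_on UNIV (smooth_ramp m)"
  by (subst smooth_ramp_eq_moving_average)
    (rule continuous_on_moving_average[OF window_pos integrable_smooth_ramp])

lemma has_real_derivative_smooth_ramp:
  "(smooth_ramp m has_real_derivative
     (smooth_ramp (Suc m) x - smooth_ramp (Suc m) (x - window m)) / window m) (at x)"
  by (subst smooth_ramp_eq_moving_average)
    (rule has_real_derivative_moving_average[OF window_pos continuous_on_smooth_ramp])

fun smooth_ramp_deriv :: "nat \<Rightarrow> nat \<Rightarrow> real \<Rightarrow> real" where
  "smooth_ramp_deriv 0 m x = smooth_ramp m x"
| "smooth_ramp_deriv (Suc k) m x =
     (smooth_ramp_deriv k (Suc m) x - smooth_ramp_deriv k (Suc m) (x - window m)) / window m"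

lemma has_real_derivative_smooth_ramp_deriv:
  "(smooth_ramp_deriv k m has_real_derivative smooth_ramp_deriv (Suc k) m x) (at x)"
proof (induction k arbitrary: m x)
  case 0
  show ?case
    using has_real_derivative_smooth_ramp[of m x] by (simp add: fun_eq_iff[symmetric])
next
  case (Suc k)
  have "((\<lambda>x. smooth_ramp_deriv k (Suc m) (x - window m)) has_real_derivative
      smooth_ramp_deriv (Suc k) (Suc m) (x - window m) * 1) (at x)"
    by (rule DERIV_chain2[OF Suc.IH]) (auto intro!: derivative_eq_intros)
  from DERIV_cdivide[OF DERIV_diff[OF Suc.IH this], where c = "window m"] show ?case
    by (simp del: smooth_ramp_deriv.simps(1) add: smooth_ramp_deriv.simps(2)[abs_def])
qed

lemma smooth_ramp_deriv_bound:
  "\<bar>smooth_ramp_deriv k m x\<bar> \<le> 2 ^ k / (\<Prod>j<k. window (m + j))"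
proof (induction k arbitrary: m x)
  case 0
  then show ?case using smooth_ramp_bounds[of m x] by simp
next
  case (Suc k)
  define P where "P = (\<Prod>j<k. window (Suc m + j))"
  have "(\<Prod>j<Suc k. window (m + j)) = window m * P"
    unfolding P_def by (simp add: prod.lessThan_Suc_shift del: prod.lessThan_Suc)
  moreover have "\<bar>smooth_ramp_deriv k (Suc m) x - smooth_ramp_deriv k (Suc m) (x - window m)\<bar>
      \<le> 2 * (2 ^ k / P)"
    using Suc.IH[of "Suc m" x] Suc.IH[of "Suc m" "x - window m"] unfolding P_def by linarith
  ultimately show ?case
    using window_pos[of m] by (simp add: divide_right_mono field_simps)
qed

lemma smooth_ramp_deriv_eq_0: "x \<le> 0 \<Longrightarrow> smooth_ramp_deriv k m x = 0"
proof (induction k arbitrary: m x)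
  case 0
  then show ?case by (simp add: smooth_ramp_eq_0)
next
  case (Suc k)
  then show ?case using window_pos[of m] by simp
qed

lemma smooth_ramp_deriv_eq_0_right:
  "x \<ge> 1 + \<tau> m \<Longrightarrow> smooth_ramp_deriv (Suc k) m x = 0"
proof (induction k arbitrary: m x)
  case 0
  then show ?case
    using scale_decreasing[of m] by (simp add: smooth_ramp_eq_1 window_def)
next
  case (Suc k)
  have "x \<ge> 1 + \<tau> (Suc m)" "x - window m \<ge> 1 + \<tau> (Suc m)"
    using Suc.prems scale_decreasing[of m] by (simp_all add: window_def)
  then show ?case
    using Suc.IH by (simp del: smooth_ramp_deriv.simps(2) add: smooth_ramp_deriv.simps(2)[of "Suc k"])
qed

end

lemma sum_binomial_Suc_convolution:
  fixes u v :: "nat \<Rightarrow> real"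
  shows "(\<Sum>i\<le>k. real (k choose i) * (u (Suc i) * v (k - i) + u i * v (Suc (k - i)))) =
         (\<Sum>i\<le>Suc k. real (Suc k choose i) * u i * v (Suc k - i))"
proof -
  have A: "(\<Sum>i\<le>Suc k. real (Suc k choose i) * u i * v (Suc k - i)) =
      u 0 * v (Suc k) + (\<Sum>i\<le>k. real (Suc k choose Suc i) * u (Suc i) * v (k - i))"
    by (subst sum.atMost_Suc_shift) simp
  have B: "(\<Sum>i\<le>k. real (Suc k choose Suc i) * u (Suc i) * v (k - i)) =
      (\<Sum>i\<le>k. real (k choose i) * u (Suc i) * v (k - i)) + (\<Sum>i\<le>k. real (k choose Suc i) * u (Suc i) * v (k - i))"
    by (simp add: sum.distrib[symmetric] algebra_simps)
  have C: "(\<Sum>i\<le>Suc k. real (k choose i) * u i * v (Suc k - i)) =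
      u 0 * v (Suc k) + (\<Sum>i\<le>k. real (k choose Suc i) * u (Suc i) * v (k - i))"
    by (subst sum.atMost_Suc_shift) simp
  have D: "(\<Sum>i\<le>Suc k. real (k choose i) * u i * v (Suc k - i)) = (\<Sum>i\<le>k. real (k choose i) * u i * v (Suc (k - i)))"
    by (simp add: Suc_diff_le)
  show ?thesis
    unfolding A B using C D by (simp add: sum.distrib algebra_simps)
qed

lemma has_real_derivative_binomial_convolution:
  assumes "\<And>i x. i \<le> k \<Longrightarrow> (u i has_real_derivative u (Suc i) x) (at x)"
    and "\<And>j x. j \<le> k \<Longrightarrow> (v j has_real_derivative v (Suc j) x) (at x)"
  shows "((\<lambda>x. \<Sum>i\<le>k. real (k choose i) * u i x * v (k - i) x) has_real_derivative
    (\<Sum>i\<le>Suc k. real (Suc k choose i) * u i x * v (Suc k - i) x)) (at x)"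
proof -
  have "((\<lambda>x. \<Sum>i\<le>k. real (k choose i) * u i x * v (k - i) x) has_real_derivative
      (\<Sum>i\<le>k. real (k choose i) * (u (Suc i) x * v (k - i) x + u i x * v (Suc (k - i)) x))) (at x)"
    using assms by (intro DERIV_sum derivative_eq_intros) (auto simp: algebra_simps)
  then show ?thesis
    by (simp only: sum_binomial_Suc_convolution[of k "\<lambda>i. u i x" "\<lambda>j. v j x"])
qed

text \<open>If \<open>P k\<close> is the \<open>k\<close>-th derivative of \<open>P 0\<close>, then \<open>trig_comp_deriv \<alpha> P True k\<close> and
  \<open>trig_comp_deriv \<alpha> P False k\<close> are the \<open>k\<close>-th derivatives of \<open>sin (\<alpha> P 0)\<close> and \<open>cos (\<alpha> P 0)\<close>:
  the recursion is the Leibniz rule for \<open>(sin (\<alpha> P 0))' = \<alpha> P 1 cos (\<alpha> P 0)\<close> and its cosine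
  analogue.\<close>

fun trig_comp_deriv :: "real \<Rightarrow> (nat \<Rightarrow> real \<Rightarrow> real) \<Rightarrow> bool \<Rightarrow> nat \<Rightarrow> real \<Rightarrow> real" where
  "trig_comp_deriv \<alpha> P b 0 x = (if b then sin (\<alpha> * P 0 x) else cos (\<alpha> * P 0 x))"
| "trig_comp_deriv \<alpha> P b (Suc k) x = (if b then \<alpha> else - \<alpha>) *
     (\<Sum>i\<le>k. real (k choose i) * P (Suc i) x * trig_comp_deriv \<alpha> P (\<not> b) (k - i) x)"

lemma has_real_derivative_trig_comp_deriv:
  assumes P: "\<And>k x. (P k has_real_derivative P (Suc k) x) (at x)"
  shows "(trig_comp_deriv \<alpha> P b n has_real_derivative trig_comp_deriv \<alpha> P b (Suc n) x) (at x)"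
proof (induction n arbitrary: b x rule: less_induct)
  case (less n)
  show ?case
  proof (cases n)
    case 0
    have "((\<lambda>x. sin (\<alpha> * P 0 x)) has_real_derivative cos (\<alpha> * P 0 x) * (\<alpha> * P (Suc 0) x)) (at x)"
      "((\<lambda>x. cos (\<alpha> * P 0 x)) has_real_derivative - sin (\<alpha> * P 0 x) * (\<alpha> * P (Suc 0) x)) (at x)"
      by (intro DERIV_chain2[OF DERIV_sin] DERIV_chain2[OF DERIV_cos] DERIV_cmult P)+
    with 0 show ?thesis
      by (cases b) (simp_all add: algebra_simps)
  next
    case (Suc k)
    have "((\<lambda>x. \<Sum>i\<le>k. real (k choose i) * P (Suc i) x * trig_comp_deriv \<alpha> P (\<not> b) (k - i) x)
        has_real_derivative (\<Sum>i\<le>Suc k. real (Suc k choose i) * P (Suc i) x *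
          trig_comp_deriv \<alpha> P (\<not> b) (Suc k - i) x)) (at x)"
      by (rule has_real_derivative_binomial_convolution)
        (use Suc in \<open>auto intro!: P less.IH simp del: trig_comp_deriv.simps\<close>)
    from DERIV_cmult[OF this, of "if b then \<alpha> else - \<alpha>"] Suc show ?thesis
      by (simp del: trig_comp_deriv.simps add: trig_comp_deriv.simps(2)[abs_def])
  qed
qed

text \<open>The growth condition on \<open>q\<close> says that \<open>q j / j\<close> is essentially increasing; it makes the
  weights \<open>\<Prod>j<k. q j\<close> behave like \<open>k!\<close> under binomial convolution.\<close>

lemma binomial_mult_prod_le:
  fixes q :: "nat \<Rightarrow> real"
  assumes q0: "\<And>j. 0 \<le> q j" and hq: "\<And>m n. m < n \<Longrightarrow> q m * real n \<le> q n * real (Suc m)"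
  shows "real ((i + m) choose i) * (\<Prod>j<Suc i. q j) * (\<Prod>j<m. q j) \<le> (\<Prod>j<Suc (i + m). q j)"
proof (induction m)
  case 0 then show ?case by simp
next
  case (Suc m)
  define A where "A = (\<Prod>j<Suc i. q j)"
  define B where "B = (\<Prod>j<m. q j)"
  define E where "E = (\<Prod>j<Suc (i + m). q j)"
  have A0: "A \<ge> 0" "B \<ge> 0" "E \<ge> 0" unfolding A_def B_def E_def by (rule prod_nonneg, rule q0)+
  have bin: "real (Suc m) * real ((i + Suc m) choose i) = real (Suc (i + m)) * real ((i + m) choose i)"
  proof -
    have "(Suc (i+m) - i) * (Suc (i + m) choose i) = Suc (i + m) * ((Suc (i + m) - 1) choose i)"
      by (rule binomial_absorb_comp)
    then have "Suc m * ((i + Suc m) choose i) = Suc (i + m) * ((i + m) choose i)" by simp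
    then show ?thesis by (metis of_nat_mult)
  qed
  have IH: "real ((i + m) choose i) * A * B \<le> E" using Suc.IH unfolding A_def B_def E_def .
  have "real (Suc m) * (real ((i + Suc m) choose i) * A * (B * q m))
      = real (Suc (i + m)) * (real ((i + m) choose i) * A * B) * q m"
    using bin by (simp add: algebra_simps)
  also have "\<dots> \<le> real (Suc (i + m)) * E * q m"
    using IH q0[of m] by (intro mult_right_mono mult_left_mono) auto
  also have "\<dots> = E * (q m * real (Suc (i + m)))" by (simp add: algebra_simps)
  also have "\<dots> \<le> E * (q (Suc (i + m)) * real (Suc m))"
    using hq[of m "Suc (i + m)"] A0 by (intro mult_left_mono) auto
  finally have "real (Suc m) * (real ((i + Suc m) choose i) * A * (B * q m)) \<le> real (Suc m) * (E * q (Suc (i + m)))"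
    by (simp add: algebra_simps)
  then have "real ((i + Suc m) choose i) * A * (B * q m) \<le> E * q (Suc (i + m))"
    by (rule mult_left_le_imp_le) simp
  then show ?case unfolding A_def B_def E_def by simp
qed

lemma sum_pow4_le: "(\<Sum>i\<le>k. (4::real) ^ (k - i)) \<le> 4 ^ Suc k / 3"
proof -
  have "(\<Sum>i\<le>k. (4::real) ^ (k - i)) = (\<Sum>i\<le>k. 4 ^ i)"
    by (rule sum.reindex_bij_witness[of _ "\<lambda>i. k - i" "\<lambda>i. k - i"]) auto
  also have "\<dots> \<le> 4 ^ Suc k / 3"
    by (induction k) simp_all
  finally show ?thesis .
qed

lemma binomial_convolution_weight_le:
  fixes q :: "nat \<Rightarrow> real"
  assumes q0: "\<And>j. 0 \<le> q j" and hq: "\<And>m n. m < n \<Longrightarrow> q m * real n \<le> q n * real (Suc m)"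
    and r: "0 \<le> r"
  shows "(\<Sum>i\<le>k. real (k choose i) * (r ^ Suc i * (\<Prod>j<Suc i. q j)) * ((4 * r) ^ (k - i) * (\<Prod>j<k - i. q j)))
    \<le> (4 * r) ^ Suc k * (\<Prod>j<Suc k. q j) / 2"
proof -
  define W where "W = (\<Prod>j<Suc k. q j)"
  have "0 \<le> W"
    unfolding W_def by (simp add: prod_nonneg q0)
  have "real (k choose i) * (r ^ Suc i * (\<Prod>j<Suc i. q j)) * ((4 * r) ^ (k - i) * (\<Prod>j<k - i. q j))
      \<le> r ^ Suc k * W * 4 ^ (k - i)" if "i \<le> k" for i
  proof -
    define C where "C = real (k choose i) * (\<Prod>j<Suc i. q j) * (\<Prod>j<k - i. q j)"
    have "C \<le> W"
      using binomial_mult_prod_le[OF q0 hq, of i "k - i"] that by (simp add: C_def W_def)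
    have "r ^ Suc k = r ^ Suc i * r ^ (k - i)"
      using that by (simp flip: power_add)
    then have "r ^ Suc i * (4 * r) ^ (k - i) = r ^ Suc k * 4 ^ (k - i)"
      by (simp only: power_mult_distrib mult_ac)
    have "real (k choose i) * (r ^ Suc i * (\<Prod>j<Suc i. q j)) * ((4 * r) ^ (k - i) * (\<Prod>j<k - i. q j))
        = r ^ Suc i * (4 * r) ^ (k - i) * C"
      by (simp only: C_def mult_ac)
    also have "\<dots> = r ^ Suc k * 4 ^ (k - i) * C"
      by (simp only: \<open>r ^ Suc i * (4 * r) ^ (k - i) = r ^ Suc k * 4 ^ (k - i)\<close>)
    also have "\<dots> \<le> r ^ Suc k * 4 ^ (k - i) * W"
      using \<open>C \<le> W\<close> r by (intro mult_left_mono) simp_all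
    finally show ?thesis
      by (simp only: mult_ac)
  qed
  then have "(\<Sum>i\<le>k. real (k choose i) * (r ^ Suc i * (\<Prod>j<Suc i. q j)) * ((4 * r) ^ (k - i) * (\<Prod>j<k - i. q j)))
      \<le> (\<Sum>i\<le>k. r ^ Suc k * W * 4 ^ (k - i))"
    by (intro sum_mono) simp
  also have "\<dots> = r ^ Suc k * W * (\<Sum>i\<le>k. 4 ^ (k - i))"
    by (simp only: sum_distrib_left)
  also have "\<dots> \<le> r ^ Suc k * W * (4 ^ Suc k / 3)"
    using sum_pow4_le[of k] r \<open>0 \<le> W\<close> by (intro mult_left_mono) auto
  also have "\<dots> \<le> (4 * r) ^ Suc k * W / 2"
    using r \<open>0 \<le> W\<close> by (simp add: power_mult_distrib)
  finally show ?thesis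
    by (simp add: W_def)
qed

lemma trig_comp_deriv_bound:
  fixes q :: "nat \<Rightarrow> real"
  assumes q0: "\<And>j. 0 \<le> q j" and hq: "\<And>m n. m < n \<Longrightarrow> q m * real n \<le> q n * real (Suc m)"
    and P: "\<And>j x. j \<ge> 1 \<Longrightarrow> \<bar>P j x\<bar> \<le> r ^ j * (\<Prod>i<j. q i)"
    and r: "0 \<le> r" and \<alpha>: "\<bar>\<alpha>\<bar> \<le> 2"
  shows "\<bar>trig_comp_deriv \<alpha> P b k x\<bar> \<le> (4 * r) ^ k * (\<Prod>i<k. q i)"
proof (induction k arbitrary: b rule: less_induct)
  case (less n)
  show ?case
  proof (cases n)
    case 0
    then show ?thesis by auto
  next
    case (Suc k)
    have "\<bar>real (k choose i) * P (Suc i) x * trig_comp_deriv \<alpha> P (\<not> b) (k - i) x\<bar>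
        \<le> real (k choose i) * (r ^ Suc i * (\<Prod>j<Suc i. q j)) * ((4 * r) ^ (k - i) * (\<Prod>j<k - i. q j))"
      if "i \<le> k" for i
      unfolding abs_mult using P[of "Suc i" x] less.IH[of "k - i" "\<not> b"] Suc that
      by (intro mult_mono) auto
    then have sum_le: "\<bar>\<Sum>i\<le>k. real (k choose i) * P (Suc i) x * trig_comp_deriv \<alpha> P (\<not> b) (k - i) x\<bar>
        \<le> (4 * r) ^ Suc k * (\<Prod>j<Suc k. q j) / 2"
      by (intro order_trans[OF sum_abs] order_trans[OF sum_mono binomial_convolution_weight_le[OF q0 hq r]]) auto
    have "\<bar>trig_comp_deriv \<alpha> P b (Suc k) x\<bar>
        = \<bar>\<alpha>\<bar> * \<bar>\<Sum>i\<le>k. real (k choose i) * P (Suc i) x * trig_comp_deriv \<alpha> P (\<not> b) (k - i) x\<bar>"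
      by (cases b) (simp_all only: trig_comp_deriv.simps abs_mult abs_minus if_True if_False)
    also have "\<dots> \<le> 2 * ((4 * r) ^ Suc k * (\<Prod>j<Suc k. q j) / 2)"
      by (rule mult_mono[OF \<alpha> sum_le]) simp_all
    finally show ?thesis
      using Suc by (simp add: mult_ac del: trig_comp_deriv.simps)
  qed
qed

definition tower :: "nat \<Rightarrow> real" where
  "tower n = (exp ^^ n) 1"

lemma tower_Suc: "tower (Suc n) = exp (tower n)"
  by (simp add: tower_def)

lemma one_le_tower: "1 \<le> tower n"
  by (induction n) (auto simp: tower_def intro: order_trans[OF _ exp_ge_add_one_self])

lemma iterated_ln_Suc_right: "(ln ^^ Suc j) x = (ln ^^ j) (ln x)"
  by (simp add: funpow_Suc_right del: funpow.simps)

lemma tower_le_iterated_ln: "tower n \<le> x \<Longrightarrow> j \<le> n \<Longrightarrow> tower (n - j) \<le> (ln ^^ j) x"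
proof (induction j)
  case 0
  then show ?case by simp
next
  case (Suc j)
  then have "tower (n - j) \<le> (ln ^^ j) x" "n - j = Suc (n - Suc j)"
    by simp_all
  then have "ln (exp (tower (n - Suc j))) \<le> ln ((ln ^^ j) x)"
    using one_le_tower[of "n - j"] by (subst ln_le_cancel_iff) (auto simp: tower_Suc intro: less_le_trans[OF exp_gt_zero])
  then show ?case by simp
qed

lemma one_le_iterated_ln: "tower n \<le> x \<Longrightarrow> j \<le> n \<Longrightarrow> 1 \<le> (ln ^^ j) x"
  using tower_le_iterated_ln one_le_tower order_trans by blast

lemma iterated_ln_mono:
  "tower n \<le> x \<Longrightarrow> x \<le> y \<Longrightarrow> j \<le> Suc n \<Longrightarrow> (ln ^^ j) x \<le> (ln ^^ j) y"
proof (induction j)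
  case 0
  then show ?case by simp
next
  case (Suc j)
  then show ?case using one_le_iterated_ln[of n x j] by simp
qed

lemma has_real_derivative_iterated_ln:
  "tower n \<le> x \<Longrightarrow> j \<le> Suc n \<Longrightarrow>
    ((ln ^^ j) has_real_derivative 1 / (\<Prod>i<j. (ln ^^ i) x)) (at x)"
proof (induction j)
  case 0
  then show ?case by simp
next
  case (Suc j)
  have "0 < (ln ^^ j) x"
    using one_le_iterated_ln[of n x j] Suc.prems by simp
  from DERIV_chain2[OF DERIV_ln[OF this] Suc.IH] Suc.prems show ?case
    by (simp add: o_def field_simps)
qed

lemma eventually_iterated_ln_double: "\<forall>\<^sub>F x in at_top. (ln ^^ i) (2 * x :: real) \<le> 2 * (ln ^^ i) x"
proof (induction i)
  case 0
  then show ?case by simp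
next
  case (Suc i)
  have "\<forall>\<^sub>F x in at_top. (ln ^^ i) (2 * ln x) \<le> 2 * (ln ^^ i) (ln x :: real)"
    by (rule eventually_compose_filterlim[OF Suc.IH ln_at_top])
  moreover have "\<forall>\<^sub>F x in at_top. x \<ge> max 2 (exp (tower i))"
    by (rule eventually_ge_at_top)
  ultimately show ?case
  proof eventually_elim
    case (elim x)
    then have "ln (2 * x) = ln 2 + ln x" "ln 2 \<le> ln x" "tower i \<le> ln x"
      by (auto simp: ln_mult ln_ge_iff)
    moreover have "0 < ln (2 :: real)"
      by simp
    ultimately have "tower i \<le> ln (2 * x)" "ln (2 * x) \<le> 2 * ln x"
      by linarith+
    then have "(ln ^^ i) (ln (2 * x)) \<le> (ln ^^ i) (2 * ln x)"
      by (intro iterated_ln_mono) auto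
    with elim show ?case
      by (simp only: iterated_ln_Suc_right)
  qed
qed

lemma has_real_derivative_rescaled:
  assumes "\<And>k x. (G k has_real_derivative G (Suc k) x) (at x)"
  shows "((\<lambda>t. c ^ k * G k (c * t - d)) has_real_derivative c ^ Suc k * G (Suc k) (c * t - d)) (at t)"
proof -
  have "((\<lambda>t. G k (c * t - d)) has_real_derivative G (Suc k) (c * t - d) * c) (at t)"
    by (rule DERIV_chain2[OF assms]) (auto intro!: derivative_eq_intros)
  from DERIV_cmult[OF this, of "c ^ k"] show ?thesis
    by (simp add: algebra_simps)
qed

lemma smooth_derivs_nonnegI:
  assumes "\<And>x. D 0 x = f x" "\<And>k x. (D k has_real_derivative D (Suc k) x) (at x)"
  shows "smooth_derivs_nonneg f D"
  unfolding smooth_derivs_nonneg_def using assms by (auto intro: has_field_derivative_at_within)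

lemma supp_nonneg_subset:
  assumes "closed S" "\<And>x. 0 \<le> x \<Longrightarrow> f x \<noteq> 0 \<Longrightarrow> x \<in> S"
  shows "supp_nonneg f \<subseteq> S"
  unfolding supp_nonneg_def using assms by (intro closure_minimal) auto

lemma admissible_TypeC_imp_TypeB: "admissible TypeC f \<Longrightarrow> admissible TypeB f"
  by (simp add: admissible_def)

definition bounded_cutoff ::
    "adm_type \<Rightarrow> (real \<Rightarrow> real) \<Rightarrow> (nat \<Rightarrow> real \<Rightarrow> real) \<Rightarrow> (nat \<Rightarrow> real) \<Rightarrow> bool" where
  "bounded_cutoff ty f D M \<longleftrightarrow> smooth_derivs_nonneg f D \<and> admissible ty f \<and>
     (\<forall>x\<ge>0. 0 \<le> f x \<and> f x \<le> 1) \<and> (\<forall>k\<ge>1. D k 1 = 0) \<and> (\<forall>k\<ge>1. \<forall>x\<ge>0. \<bar>D k x\<bar> \<le> M k)"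

lemma bounded_cutoff_mono:
  "bounded_cutoff ty f D M \<Longrightarrow> (\<And>k. k \<ge> 1 \<Longrightarrow> M k \<le> M' k) \<Longrightarrow> bounded_cutoff ty f D M'"
  unfolding bounded_cutoff_def by (meson order_trans)

locale cutoff_scales = averaging_scales +
  fixes r :: real and q :: "nat \<Rightarrow> real"
  assumes first_scale_le_1: "\<tau> 0 \<le> 1"
    and weight_nonneg: "\<And>j. 0 \<le> q j"
    and weight_growth: "\<And>m n. m < n \<Longrightarrow> q m * real n \<le> q n * real (Suc m)"
    and inverse_window_le: "\<And>j. 1 / window j \<le> r * q j"
begin

lemma rate_pos: "0 < r"
proof -
  have "0 < r * q 0"
    using inverse_window_le[of 0] window_pos[of 0] by (meson less_le_trans zero_less_divide_1_iff)
  then show ?thesis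
    using weight_nonneg[of 0] by (simp add: zero_less_mult_iff)
qed

lemma prod_weight_nonneg: "0 \<le> (\<Prod>j<k. q j)"
  by (simp add: prod_nonneg weight_nonneg)

lemma smooth_ramp_deriv_le: "\<bar>smooth_ramp_deriv k 0 x\<bar> \<le> (2 * r) ^ k * (\<Prod>j<k. q j)"
proof -
  have "\<bar>smooth_ramp_deriv k 0 x\<bar> \<le> 2 ^ k * (\<Prod>j<k. 1 / window j)"
    using smooth_ramp_deriv_bound[of k 0 x] by (simp add: prod_dividef)
  also have "\<dots> \<le> 2 ^ k * (\<Prod>j<k. r * q j)"
    using window_pos inverse_window_le by (intro mult_left_mono prod_mono) (auto simp: less_imp_le)
  finally show ?thesis
    by (simp add: prod.distrib power_mult_distrib mult.assoc)
qed

lemma smooth_ramp_eq_1_above_2: "x \<ge> 2 \<Longrightarrow> smooth_ramp 0 x = 1"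
  using first_scale_le_1 by (simp add: smooth_ramp_eq_1)

lemma smooth_ramp_deriv_eq_0_above_2: "x \<ge> 2 \<Longrightarrow> smooth_ramp_deriv (Suc k) 0 x = 0"
  using first_scale_le_1 by (simp add: smooth_ramp_deriv_eq_0_right del: smooth_ramp_deriv.simps)

definition cutoff_A_deriv :: "nat \<Rightarrow> real \<Rightarrow> real" where
  "cutoff_A_deriv k t = (if k = 0 then 1 else 0) - 2 ^ k * smooth_ramp_deriv k 0 (2 * t - 2)"

lemma bounded_cutoff_TypeA:
  "bounded_cutoff TypeA (cutoff_A_deriv 0) cutoff_A_deriv (\<lambda>k. (4 * r) ^ k * (\<Prod>j<k. q j))"
  unfolding bounded_cutoff_def
proof (intro conjI allI impI)
  show "smooth_derivs_nonneg (cutoff_A_deriv 0) cutoff_A_deriv"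
    unfolding cutoff_A_deriv_def
    by (intro smooth_derivs_nonnegI DERIV_diff DERIV_const
        has_real_derivative_rescaled[where G = "\<lambda>k. smooth_ramp_deriv k 0", OF has_real_derivative_smooth_ramp_deriv]) auto
  have "supp_nonneg (cutoff_A_deriv 0) \<subseteq> {0..2}"
    by (rule supp_nonneg_subset)
      (auto simp: cutoff_A_deriv_def smooth_ramp_eq_1_above_2 intro: ccontr)
  then show "admissible TypeA (cutoff_A_deriv 0)"
    by (simp add: admissible_def cutoff_A_deriv_def smooth_ramp_eq_0)
  show "0 \<le> cutoff_A_deriv 0 x" "cutoff_A_deriv 0 x \<le> 1" for x
    using smooth_ramp_bounds[of 0 "2 * x - 2"] by (simp_all add: cutoff_A_deriv_def)
  show "cutoff_A_deriv k 1 = 0" if "k \<ge> 1" for k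
    using that by (simp add: cutoff_A_deriv_def smooth_ramp_deriv_eq_0)
  show "\<bar>cutoff_A_deriv k x\<bar> \<le> (4 * r) ^ k * (\<Prod>j<k. q j)" if "k \<ge> 1" for k x
  proof -
    have "\<bar>cutoff_A_deriv k x\<bar> = 2 ^ k * \<bar>smooth_ramp_deriv k 0 (2 * x - 2)\<bar>"
      using that by (simp add: cutoff_A_deriv_def abs_mult)
    also have "\<dots> \<le> 2 ^ k * ((2 * r) ^ k * (\<Prod>j<k. q j))"
      by (intro mult_left_mono smooth_ramp_deriv_le) simp
    also have "\<dots> = (2 * (2 * r)) ^ k * (\<Prod>j<k. q j)"
      by (simp only: power_mult_distrib mult.assoc)
    finally show ?thesis
      by simp
  qed
qed

text \<open>For type (c) one takes \<open>sin (\<pi>/2 \<cdot> (\<phi> (4t - 2) + \<phi> (2t - 2)))\<close> with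
  \<open>\<phi> = smooth_ramp 0\<close>: for \<open>t \<in> [1, 2]\<close> the phases at \<open>t\<close> and \<open>t / 2\<close> differ by exactly 1,
  which turns \<open>sin\<close> into \<open>cos\<close>.\<close>

definition phase_deriv :: "nat \<Rightarrow> real \<Rightarrow> real" where
  "phase_deriv k t = 4 ^ k * smooth_ramp_deriv k 0 (4 * t - 2) + 2 ^ k * smooth_ramp_deriv k 0 (2 * t - 2)"

definition cutoff_C_deriv :: "nat \<Rightarrow> real \<Rightarrow> real" where
  "cutoff_C_deriv = trig_comp_deriv (pi / 2) phase_deriv True"

lemma has_real_derivative_phase_deriv:
  "(phase_deriv k has_real_derivative phase_deriv (Suc k) x) (at x)"
  unfolding phase_deriv_def
  by (intro DERIV_add has_real_derivative_rescaled[where G = "\<lambda>k. smooth_ramp_deriv k 0", OF has_real_derivative_smooth_ramp_deriv])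

lemma phase_deriv_le: "j \<ge> 1 \<Longrightarrow> \<bar>phase_deriv j t\<bar> \<le> (16 * r) ^ j * (\<Prod>i<j. q i)"
proof -
  assume j: "j \<ge> 1"
  define Y where "Y = (2 * r) ^ j * (\<Prod>i<j. q i)"
  have "0 \<le> Y"
    using rate_pos prod_weight_nonneg by (simp add: Y_def)
  have "\<bar>smooth_ramp_deriv j 0 y\<bar> \<le> Y" for y
    unfolding Y_def by (rule smooth_ramp_deriv_le)
  then have "\<bar>phase_deriv j t\<bar> \<le> 4 ^ j * Y + 2 ^ j * Y"
    unfolding phase_deriv_def
    by (intro order_trans[OF abs_triangle_ineq] add_mono) (simp_all add: abs_mult)
  also have "\<dots> \<le> 2 * (4 ^ j * Y)"
    using mult_right_mono[OF power_mono[of 2 4 j] \<open>0 \<le> Y\<close>] by (simp add: mult.commute)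
  also have "\<dots> \<le> 2 ^ j * (4 ^ j * Y)"
    using power_increasing[of 1 j "2::real"] j \<open>0 \<le> Y\<close> by (intro mult_right_mono) simp_all
  also have "\<dots> = (2 * (4 * (2 * r))) ^ j * (\<Prod>i<j. q i)"
    unfolding Y_def by (simp only: power_mult_distrib mult.assoc)
  finally show ?thesis
    by simp
qed

lemma cutoff_C_nonzero_imp: "cutoff_C_deriv 0 t \<noteq> 0 \<Longrightarrow> 1/2 < t \<and> t < 2"
  by (cases "t \<le> 1/2"; cases "t \<ge> 2")
    (auto simp: cutoff_C_deriv_def phase_deriv_def smooth_ramp_eq_0 smooth_ramp_eq_1_above_2)

lemma admissible_TypeC_cutoff: "admissible TypeC (cutoff_C_deriv 0)"
proof -
  have "supp_nonneg (cutoff_C_deriv 0) \<subseteq> {1/2..2}"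
    by (rule supp_nonneg_subset) (auto dest: cutoff_C_nonzero_imp)
  moreover have "\<bar>cutoff_C_deriv 0 t\<bar>^2 + \<bar>cutoff_C_deriv 0 (t/2)\<bar>^2 = 1" if "t \<in> {1..2}" for t
  proof -
    define v where "v = smooth_ramp 0 (2 * t - 2)"
    have "cutoff_C_deriv 0 t = sin (pi / 2 + pi / 2 * v)"
      using that by (simp add: cutoff_C_deriv_def phase_deriv_def v_def smooth_ramp_eq_1_above_2 distrib_left)
    moreover have "cutoff_C_deriv 0 (t / 2) = sin (pi / 2 * v)"
      using that by (simp add: cutoff_C_deriv_def phase_deriv_def v_def smooth_ramp_eq_0)
    ultimately show ?thesis
      by (simp add: sin_add)
  qed
  ultimately show ?thesis
    by (simp add: admissible_def)
qed

lemma bounded_cutoff_TypeC: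
  "bounded_cutoff TypeC (cutoff_C_deriv 0) cutoff_C_deriv (\<lambda>k. (64 * r) ^ k * (\<Prod>j<k. q j))"
  unfolding bounded_cutoff_def
proof (intro conjI allI impI admissible_TypeC_cutoff)
  show "smooth_derivs_nonneg (cutoff_C_deriv 0) cutoff_C_deriv"
    unfolding cutoff_C_deriv_def
    by (intro smooth_derivs_nonnegI has_real_derivative_trig_comp_deriv has_real_derivative_phase_deriv) simp
  fix x :: real
  have "0 \<le> phase_deriv 0 x" "phase_deriv 0 x \<le> 2"
    using smooth_ramp_bounds[of 0 "4 * x - 2"] smooth_ramp_bounds[of 0 "2 * x - 2"]
    by (simp_all add: phase_deriv_def)
  then show "0 \<le> cutoff_C_deriv 0 x" "cutoff_C_deriv 0 x \<le> 1"
    by (simp_all add: cutoff_C_deriv_def sin_ge_zero)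
next
  fix k :: nat
  assume "k \<ge> 1"
  then obtain m where "k = Suc m"
    using not0_implies_Suc by force
  moreover have "phase_deriv (Suc i) 1 = 0" for i
    by (simp add: phase_deriv_def smooth_ramp_deriv_eq_0 smooth_ramp_deriv_eq_0_above_2
        del: smooth_ramp_deriv.simps)
  ultimately show "cutoff_C_deriv k 1 = 0"
    by (simp add: cutoff_C_deriv_def)
next
  fix k :: nat and x :: real
  have "\<bar>trig_comp_deriv (pi / 2) phase_deriv True k x\<bar> \<le> (4 * (16 * r)) ^ k * (\<Prod>i<k. q i)"
    by (rule trig_comp_deriv_bound[OF weight_nonneg weight_growth phase_deriv_le])
      (use rate_pos pi_less_4 in auto)
  then show "\<bar>cutoff_C_deriv k x\<bar> \<le> (64 * r) ^ k * (\<Prod>j<k. q j)"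
    by (simp add: cutoff_C_deriv_def)
qed

lemma exists_bounded_cutoff: "\<exists>f D. bounded_cutoff ty f D (\<lambda>k. (64 * r) ^ k * (\<Prod>j<k. q j))"
proof -
  have "bounded_cutoff TypeA (cutoff_A_deriv 0) cutoff_A_deriv (\<lambda>k. (64 * r) ^ k * (\<Prod>j<k. q j))"
    using rate_pos prod_weight_nonneg
    by (intro bounded_cutoff_mono[OF bounded_cutoff_TypeA] mult_right_mono power_mono) auto
  moreover have "bounded_cutoff TypeB (cutoff_C_deriv 0) cutoff_C_deriv (\<lambda>k. (64 * r) ^ k * (\<Prod>j<k. q j))"
    using bounded_cutoff_TypeC by (simp add: bounded_cutoff_def admissible_TypeC_imp_TypeB)
  ultimately show ?thesis
    using bounded_cutoff_TypeC by (cases ty) blast+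
qed

end

definition log_weight :: "nat \<Rightarrow> real \<Rightarrow> real \<Rightarrow> real" where
  "log_weight l \<epsilon> x = (\<Prod>i\<in>{1..l}. (ln ^^ i) x) * (ln ^^ Suc l) x powr (1 + \<epsilon>)"

lemma prod_iterated_ln_lessThan_Suc:
  "(\<Prod>i<Suc l. (ln ^^ i) x) = x * (\<Prod>i\<in>{1..l}. (ln ^^ i) x)"
  by (simp add: prod.lessThan_Suc_shift prod.atLeast1_atMost_eq del: prod.lessThan_Suc)

lemma prod_iterated_ln_pos: "tower (Suc l) \<le> x \<Longrightarrow> 0 < (\<Prod>i\<in>{1..l}. (ln ^^ i) x)"
  using one_le_iterated_ln[of "Suc l" x] by (intro prod_pos) (auto simp: less_le_trans[OF zero_less_one])

lemma log_weight_pos: "tower (Suc l) \<le> x \<Longrightarrow> 0 < log_weight l \<epsilon> x"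
  unfolding log_weight_def using one_le_iterated_ln[of "Suc l" x "Suc l"]
  by (intro mult_pos_pos prod_iterated_ln_pos) auto

lemma log_weight_mono:
  assumes "tower (Suc l) \<le> x" "x \<le> y" "0 \<le> \<epsilon>"
  shows "log_weight l \<epsilon> x \<le> log_weight l \<epsilon> y"
  unfolding log_weight_def
proof (intro mult_mono prod_mono powr_mono2 conjI)
  show "0 \<le> (ln ^^ i) x" "(ln ^^ i) x \<le> (ln ^^ i) y" if "i \<in> {1..l}" for i
    using that assms one_le_iterated_ln[of "Suc l" x i] iterated_ln_mono[of "Suc l" x y i] by auto
  show "0 \<le> (ln ^^ Suc l) x" "(ln ^^ Suc l) x \<le> (ln ^^ Suc l) y"
    using assms one_le_iterated_ln[of "Suc l" x "Suc l"] iterated_ln_mono[of "Suc l" x y "Suc l"] by auto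
  show "0 \<le> (\<Prod>i\<in>{1..l}. (ln ^^ i) y)"
    using assms prod_iterated_ln_pos[of l y] by simp
qed (use assms in auto)

lemma has_real_derivative_iterated_ln_powr:
  assumes "tower (Suc l) \<le> x"
  shows "((\<lambda>x. (ln ^^ Suc l) x powr (- \<epsilon>)) has_real_derivative - \<epsilon> / (x * log_weight l \<epsilon> x)) (at x)"
proof -
  have "0 < (ln ^^ Suc l) x"
    using one_le_iterated_ln[OF assms, of "Suc l"] by simp
  from DERIV_chain2[OF has_real_derivative_powr[OF this, where r = "- \<epsilon>"] has_real_derivative_iterated_ln[OF assms le_SucI[OF order.refl]]]
  have "((\<lambda>x. (ln ^^ Suc l) x powr (- \<epsilon>)) has_real_derivative
      - \<epsilon> * (ln ^^ Suc l) x powr (- \<epsilon> - 1) * (1 / (x * (\<Prod>i\<in>{1..l}. (ln ^^ i) x)))) (at x)"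
    by (simp only: prod_iterated_ln_lessThan_Suc)
  moreover have "- \<epsilon> - 1 = - (1 + \<epsilon>)"
    by simp
  then have "(ln ^^ Suc l) x powr (- \<epsilon> - 1) = 1 / (ln ^^ Suc l) x powr (1 + \<epsilon>)"
    by (simp only: powr_minus_divide)
  ultimately show ?thesis
    by (simp add: log_weight_def mult_ac del: funpow.simps)
qed

definition log_scale :: "nat \<Rightarrow> nat \<Rightarrow> real \<Rightarrow> nat \<Rightarrow> real" where
  "log_scale l N \<epsilon> m = (ln ^^ Suc l) (real (m + N)) powr (- \<epsilon>)"

lemma log_scale_diff_eq:
  assumes "tower (Suc l) \<le> real N"
  obtains z where "real (m + N) < z" "z < real (Suc m + N)"
    "log_scale l N \<epsilon> m - log_scale l N \<epsilon> (Suc m) = \<epsilon> / (z * log_weight l \<epsilon> z)"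
proof -
  have "((\<lambda>x. (ln ^^ Suc l) x powr (- \<epsilon>)) has_real_derivative - \<epsilon> / (x * log_weight l \<epsilon> x)) (at x)"
    if "real (m + N) \<le> x" for x
    by (rule has_real_derivative_iterated_ln_powr) (use assms that in simp)
  from MVT2[of "real (m + N)" "real (Suc m + N)", OF _ this]
  have "\<exists>z. real (m + N) < z \<and> z < real (Suc m + N) \<and>
      log_scale l N \<epsilon> (Suc m) - log_scale l N \<epsilon> m = (real (Suc m + N) - real (m + N)) * (- \<epsilon> / (z * log_weight l \<epsilon> z))"
    unfolding log_scale_def by auto
  then show ?thesis
    using that by auto
qed

lemma log_scale_diff_pos:
  assumes "tower (Suc l) \<le> real N" "0 < \<epsilon>"
  shows "log_scale l N \<epsilon> (Suc m) < log_scale l N \<epsilon> m"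
proof -
  obtain z where "real (m + N) < z"
    "log_scale l N \<epsilon> m - log_scale l N \<epsilon> (Suc m) = \<epsilon> / (z * log_weight l \<epsilon> z)"
    using log_scale_diff_eq[OF assms(1)] .
  moreover have "0 < log_weight l \<epsilon> z" "0 < z"
    using calculation(1) assms(1) one_le_tower[of "Suc l"] by (auto intro!: log_weight_pos)
  ultimately have "0 < log_scale l N \<epsilon> m - log_scale l N \<epsilon> (Suc m)"
    using assms(2) by simp
  then show ?thesis
    by simp
qed

lemma inverse_log_scale_diff_le:
  assumes "tower (Suc l) \<le> real N" "0 < \<epsilon>"
  shows "1 / (log_scale l N \<epsilon> m - log_scale l N \<epsilon> (Suc m))
    \<le> real (Suc m + N) * log_weight l \<epsilon> (real (Suc m + N)) / \<epsilon>"
proof -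
  obtain z where z: "real (m + N) < z" "z < real (Suc m + N)"
    "log_scale l N \<epsilon> m - log_scale l N \<epsilon> (Suc m) = \<epsilon> / (z * log_weight l \<epsilon> z)"
    using log_scale_diff_eq[OF assms(1)] .
  have "tower (Suc l) \<le> z"
    using z(1) assms(1) by simp
  then have "z * log_weight l \<epsilon> z \<le> real (Suc m + N) * log_weight l \<epsilon> (real (Suc m + N))"
    using z(2) assms(2) log_weight_pos[of l z \<epsilon>] one_le_tower[of "Suc l"]
    by (intro mult_mono log_weight_mono) auto
  then show ?thesis
    using z(3) assms(2) by (simp add: divide_right_mono)
qed

lemma averaging_scales_log_scale:
  assumes "tower (Suc l) \<le> real N" "0 < \<epsilon>"
  shows "averaging_scales (log_scale l N \<epsilon>)"
proof
  show "log_scale l N \<epsilon> (Suc m) < log_scale l N \<epsilon> m" for m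
    by (rule log_scale_diff_pos[OF assms])
  show "0 \<le> log_scale l N \<epsilon> m" for m
    by (simp add: log_scale_def)
qed

lemma cutoff_scales_log_scale:
  assumes N: "tower (Suc l) \<le> real N" and \<epsilon>: "0 < \<epsilon>"
  shows "cutoff_scales (log_scale l N \<epsilon>) (real (Suc N) / \<epsilon>)
    (\<lambda>j. real (Suc j) * log_weight l \<epsilon> (real (Suc j + N)))"
proof -
  interpret averaging_scales "log_scale l N \<epsilon>"
    by (rule averaging_scales_log_scale[OF N \<epsilon>])
  have weight_pos: "0 < log_weight l \<epsilon> (real (Suc j + N))" for j
    using N by (intro log_weight_pos) simp
  show ?thesis
  proof unfold_locales
    fix m n j :: nat
    have "1 \<le> (ln ^^ Suc l) (real N)"
      using one_le_iterated_ln[OF N, of "Suc l"] by simp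
    then show "log_scale l N \<epsilon> 0 \<le> 1"
      using powr_mono2'[of "- \<epsilon>" 1 "(ln ^^ Suc l) (real N)"] \<epsilon>
      by (simp add: log_scale_def del: funpow.simps)
    show "0 \<le> real (Suc j) * log_weight l \<epsilon> (real (Suc j + N))"
      using weight_pos by (simp add: less_imp_le)
    show "real (Suc m) * log_weight l \<epsilon> (real (Suc m + N)) * real n
        \<le> real (Suc n) * log_weight l \<epsilon> (real (Suc n + N)) * real (Suc m)" if "m < n"
    proof -
      have "log_weight l \<epsilon> (real (Suc m + N)) * real n \<le> log_weight l \<epsilon> (real (Suc n + N)) * real (Suc n)"
        using that N \<epsilon> weight_pos[of n] by (intro mult_mono log_weight_mono) auto
      from mult_left_mono[OF this, of "real (Suc m)"] show ?thesis
        by (simp add: mult_ac)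
    qed
    have "1 / window j \<le> real (Suc j + N) * log_weight l \<epsilon> (real (Suc j + N)) / \<epsilon>"
      unfolding window_def by (rule inverse_log_scale_diff_le[OF N \<epsilon>])
    also have "\<dots> \<le> real (Suc N) * real (Suc j) * log_weight l \<epsilon> (real (Suc j + N)) / \<epsilon>"
      using weight_pos[of j] \<epsilon> by (intro divide_right_mono mult_right_mono) (auto simp: algebra_simps)
    finally show "1 / window j \<le> real (Suc N) / \<epsilon> * (real (Suc j) * log_weight l \<epsilon> (real (Suc j + N)))"
      by simp
  qed
qed

lemma exists_log_cutoff:
  assumes N: "tower (Suc l) \<le> real N" and \<epsilon>: "0 < \<epsilon>"
  shows "\<exists>f D. bounded_cutoff ty f D
    (\<lambda>k. (64 * real (Suc N) / \<epsilon> * real k * log_weight l \<epsilon> (real (k + N))) ^ k)"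
proof -
  interpret cutoff_scales "log_scale l N \<epsilon>" "real (Suc N) / \<epsilon>"
      "\<lambda>j. real (Suc j) * log_weight l \<epsilon> (real (Suc j + N))"
    by (rule cutoff_scales_log_scale[OF N \<epsilon>])
  have "(64 * (real (Suc N) / \<epsilon>)) ^ k * (\<Prod>j<k. real (Suc j) * log_weight l \<epsilon> (real (Suc j + N)))
      \<le> (64 * real (Suc N) / \<epsilon> * real k * log_weight l \<epsilon> (real (k + N))) ^ k" for k
  proof -
    have "(\<Prod>j<k. real (Suc j) * log_weight l \<epsilon> (real (Suc j + N)))
        \<le> (\<Prod>j<k. real k * log_weight l \<epsilon> (real (k + N)))"
      using N \<epsilon> log_weight_pos[of l "real (Suc j + N)" \<epsilon> for j]
      by (intro prod_mono conjI mult_mono log_weight_mono) (auto simp: less_imp_le)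
    then have "(64 * (real (Suc N) / \<epsilon>)) ^ k * (\<Prod>j<k. real (Suc j) * log_weight l \<epsilon> (real (Suc j + N)))
        \<le> (64 * (real (Suc N) / \<epsilon>)) ^ k * (real k * log_weight l \<epsilon> (real (k + N))) ^ k"
      using \<epsilon> by (intro mult_left_mono) simp_all
    then show ?thesis
      unfolding power_mult_distrib[symmetric] by (simp add: mult_ac)
  qed
  moreover obtain f D where "bounded_cutoff ty f D (\<lambda>k. (64 * (real (Suc N) / \<epsilon>)) ^ k *
      (\<Prod>j<k. real (Suc j) * log_weight l \<epsilon> (real (Suc j + N))))"
    using exists_bounded_cutoff by blast
  ultimately show ?thesis
    by (blast intro: bounded_cutoff_mono)
qed

lemma power_le_scaled_power:
  fixes x y c \<epsilon> :: real
  assumes "0 \<le> x" "x \<le> c / \<epsilon> * real k * y" "1 \<le> c" "0 < \<epsilon>" "0 \<le> y"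
  shows "x ^ k \<le> c * (c / \<epsilon>) ^ k * real k ^ k * y ^ k"
proof -
  have "x ^ k \<le> (c / \<epsilon> * real k * y) ^ k"
    using assms(2,1) by (rule power_mono)
  also have "\<dots> = (c / \<epsilon>) ^ k * real k ^ k * y ^ k"
    by (simp only: power_mult_distrib)
  also have "\<dots> \<le> c * ((c / \<epsilon>) ^ k * real k ^ k * y ^ k)"
    using mult_right_mono[OF assms(3), of "(c / \<epsilon>) ^ k * real k ^ k * y ^ k"] assms(3-5) by simp
  finally show ?thesis
    by (simp add: mult.assoc)
qed

lemma log_weight_le_double:
  assumes x: "tower (Suc l) \<le> x" and "x \<le> y" and \<epsilon>: "0 \<le> \<epsilon>" "\<epsilon> \<le> 1"
    and double: "\<And>i. i \<le> Suc l \<Longrightarrow> (ln ^^ i) y \<le> 2 * (ln ^^ i) x"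
  shows "log_weight l \<epsilon> y \<le> 2 ^ (l + 2) * log_weight l \<epsilon> x"
proof -
  have ge_1: "1 \<le> (ln ^^ i) x" "1 \<le> (ln ^^ i) y" if "i \<le> Suc l" for i
    using that x \<open>x \<le> y\<close> one_le_iterated_ln[of "Suc l"] by auto
  have "(\<Prod>i\<in>{1..l}. (ln ^^ i) y) \<le> (\<Prod>i\<in>{1..l}. 2 * (ln ^^ i) x)"
    using ge_1 double by (intro prod_mono) (auto intro: order_trans[OF zero_le_one])
  also have "\<dots> = 2 ^ l * (\<Prod>i\<in>{1..l}. (ln ^^ i) x)"
    by (simp add: prod.distrib)
  finally have prod_le: "(\<Prod>i\<in>{1..l}. (ln ^^ i) y) \<le> 2 ^ l * (\<Prod>i\<in>{1..l}. (ln ^^ i) x)" .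
  define L where "L = (ln ^^ Suc l) x"
  have "1 \<le> L"
    using ge_1 by (simp add: L_def del: funpow.simps)
  have "(ln ^^ Suc l) y powr (1 + \<epsilon>) \<le> (2 * L) powr (1 + \<epsilon>)"
    using double[of "Suc l"] ge_1[of "Suc l"] \<epsilon> by (intro powr_mono2) (auto simp: L_def simp del: funpow.simps)
  also have "\<dots> = 2 powr (1 + \<epsilon>) * L powr (1 + \<epsilon>)"
    using \<open>1 \<le> L\<close> by (simp add: powr_mult)
  also have "\<dots> \<le> 2 powr 2 * L powr (1 + \<epsilon>)"
    using \<epsilon> by (intro mult_right_mono powr_mono) auto
  finally have "(ln ^^ Suc l) y powr (1 + \<epsilon>) \<le> 4 * L powr (1 + \<epsilon>)"
    by simp
  with prod_le have "log_weight l \<epsilon> y \<le> 2 ^ l * (\<Prod>i\<in>{1..l}. (ln ^^ i) x) * (4 * L powr (1 + \<epsilon>))"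
    unfolding log_weight_def using prod_iterated_ln_pos[of l y] x \<open>x \<le> y\<close>
    by (intro mult_mono) auto
  then show ?thesis
    by (simp add: log_weight_def L_def power_add mult_ac del: funpow.simps)
qed

lemma log_weight_power:
  "1 \<le> (ln ^^ Suc l) x \<Longrightarrow> log_weight l \<epsilon> x ^ k =
     (\<Prod>j\<in>{1..l}. ((ln ^^ j) x) ^ k) * (ln ^^ Suc l) x powr (real k * (1 + \<epsilon>))"
  by (simp add: log_weight_def power_mult_distrib prod_power_distrib powr_power del: funpow.simps)

lemma log_weight_0_le_double:
  assumes "3 \<le> k" "0 \<le> \<epsilon>" "\<epsilon> \<le> 1"
  shows "log_weight 0 \<epsilon> (real (k + 3)) \<le> 4 * ln (real k) powr (1 + \<epsilon>)"
proof -
  have "k + 3 \<le> k * k"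
    using assms(1) mult_le_mono1[OF assms(1), of k] by linarith
  then have "real (k + 3) \<le> real k ^ 2"
    by (metis of_nat_le_iff of_nat_mult power2_eq_square)
  then have "ln (real (k + 3)) \<le> 2 * ln (real k)"
    using assms(1) by (simp add: ln_realpow flip: ln_le_cancel_iff)
  moreover have "tower (Suc 0) \<le> real k"
    using exp_le assms(1) by (simp add: tower_def)
  ultimately have "log_weight 0 \<epsilon> (real (k + 3)) \<le> 2 ^ (0 + 2) * log_weight 0 \<epsilon> (real k)"
    using assms by (intro log_weight_le_double) (auto simp: le_Suc_eq)
  then show ?thesis
    by (simp add: log_weight_def)
qed

lemma log_weight_0_le_4:
  assumes "k \<le> 2" "0 \<le> \<epsilon>" "\<epsilon> \<le> 1"
  shows "log_weight 0 \<epsilon> (real (k + 3)) \<le> 4"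
proof -
  have "(1 + 2 / real 4) ^ 4 \<le> exp (2::real)"
    by (rule exp_ge_one_plus_x_over_n_power_n) auto
  then have "5 \<le> exp (2::real)"
    by (simp add: power_divide)
  then have "ln (real (k + 3)) \<le> ln (exp 2)"
    using assms(1) by (subst ln_le_cancel_iff) auto
  then have "ln (real (k + 3)) \<le> 2"
    by simp
  then have "ln (real (k + 3)) powr (1 + \<epsilon>) \<le> 2 powr (1 + \<epsilon>)"
    by (intro powr_mono2) (use assms in auto)
  also have "\<dots> \<le> 2 powr 2"
    using assms by (intro powr_mono) auto
  finally show ?thesis
    by (simp add: log_weight_def)
qed

lemma log_cutoff_bound_le:
  fixes l N k :: nat and \<epsilon> :: real
  defines "c \<equiv> 2 ^ (l + 8) * real (Suc N)"
  assumes N: "tower (Suc l) \<le> real N" "N \<le> k" and \<epsilon>: "0 < \<epsilon>" "\<epsilon> \<le> 1"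
    and double: "\<And>i. i \<le> Suc l \<Longrightarrow> (ln ^^ i) (2 * real k) \<le> 2 * (ln ^^ i) (real k)"
  shows "(64 * real (Suc N) / \<epsilon> * real k * log_weight l \<epsilon> (real (k + N))) ^ k
    \<le> c * (c / \<epsilon>) ^ k * real k ^ k * (\<Prod>j\<in>{1..l}. ((ln ^^ j) (real k)) ^ k) *
      (ln ^^ Suc l) (real k) powr (real k * (1 + \<epsilon>))"
proof -
  have k: "tower (Suc l) \<le> real k"
    using N by simp
  have "(ln ^^ i) (real (k + N)) \<le> 2 * (ln ^^ i) (real k)" if "i \<le> Suc l" for i
    using iterated_ln_mono[of "Suc l" "real (k + N)" "2 * real k" i] double[OF that] N that by simp
  then have "log_weight l \<epsilon> (real (k + N)) \<le> 2 ^ (l + 2) * log_weight l \<epsilon> (real k)"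
    using k \<epsilon> by (intro log_weight_le_double) auto
  then have "64 * real (Suc N) / \<epsilon> * real k * log_weight l \<epsilon> (real (k + N))
      \<le> 64 * real (Suc N) / \<epsilon> * real k * (2 ^ (l + 2) * log_weight l \<epsilon> (real k))"
    using \<epsilon> by (intro mult_left_mono) simp_all
  also have "\<dots> = c / \<epsilon> * real k * log_weight l \<epsilon> (real k)"
    unfolding c_def by (simp add: power_add)
  finally have "64 * real (Suc N) / \<epsilon> * real k * log_weight l \<epsilon> (real (k + N))
      \<le> c / \<epsilon> * real k * log_weight l \<epsilon> (real k)" .
  moreover have "0 \<le> log_weight l \<epsilon> (real k)" "0 \<le> log_weight l \<epsilon> (real (k + N))"
    using k N log_weight_pos[of l] by (auto intro: less_imp_le)
  moreover have "1 \<le> c"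
    using mult_mono[of 1 "2 ^ (l + 8)" 1 "real (Suc N)"] unfolding c_def by simp
  ultimately have "(64 * real (Suc N) / \<epsilon> * real k * log_weight l \<epsilon> (real (k + N))) ^ k
      \<le> c * (c / \<epsilon>) ^ k * real k ^ k * log_weight l \<epsilon> (real k) ^ k"
    using \<epsilon> by (intro power_le_scaled_power) auto
  then show ?thesis
    using one_le_iterated_ln[OF k, of "Suc l"] by (simp add: log_weight_power mult.assoc del: funpow.simps)
qed

lemma ln_cutoff_bound_le:
  assumes "3 \<le> k" "0 < \<epsilon>" "\<epsilon> \<le> 1"
  shows "(64 * real (Suc 3) / \<epsilon> * real k * log_weight 0 \<epsilon> (real (k + 3))) ^ k
    \<le> 1024 * (1024 / \<epsilon>) ^ k * real k ^ k * ln (real k) powr (real k * (1 + \<epsilon>))"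
proof -
  have "0 \<le> 64 * real (Suc 3) / \<epsilon> * real k * log_weight 0 \<epsilon> (real (k + 3))"
    using log_weight_pos[of 0 "real (k + 3)" \<epsilon>] exp_le assms by (simp add: tower_def)
  moreover have "64 * real (Suc 3) / \<epsilon> * real k * log_weight 0 \<epsilon> (real (k + 3))
      \<le> 64 * real (Suc 3) / \<epsilon> * real k * (4 * ln (real k) powr (1 + \<epsilon>))"
    using log_weight_0_le_double assms by (intro mult_left_mono) auto
  ultimately show ?thesis
    using power_le_scaled_power[of _ 1024 \<epsilon> k "ln (real k) powr (1 + \<epsilon>)"] assms
    by (simp add: powr_power mult_ac)
qed

lemma ln_cutoff_bound_le_small:
  assumes "k \<le> 2" "0 < \<epsilon>" "\<epsilon> \<le> 1"
  shows "(64 * real (Suc 3) / \<epsilon> * real k * log_weight 0 \<epsilon> (real (k + 3))) ^ k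
    \<le> 1024 * (1024 / \<epsilon>) ^ k * real k ^ k"
proof -
  have "0 \<le> 64 * real (Suc 3) / \<epsilon> * real k * log_weight 0 \<epsilon> (real (k + 3))"
    using log_weight_pos[of 0 "real (k + 3)" \<epsilon>] exp_le assms by (simp add: tower_def)
  moreover have "64 * real (Suc 3) / \<epsilon> * real k * log_weight 0 \<epsilon> (real (k + 3))
      \<le> 64 * real (Suc 3) / \<epsilon> * real k * 4"
    using log_weight_0_le_4 assms by (intro mult_left_mono) auto
  ultimately show ?thesis
    using power_le_scaled_power[of _ 1024 \<epsilon> k 1] assms by simp
qed

lemma cutoff_log_bound:
  "\<exists>c::real. c > 1 \<and>
     (\<forall>\<epsilon>::real. 0 < \<epsilon> \<and> \<epsilon> \<le> 1 \<longrightarrow> (\<forall>ty. \<exists>f D.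
        smooth_derivs_nonneg f D \<and> admissible ty f \<and>
        (\<forall>x\<ge>0. 0 \<le> f x \<and> f x \<le> 1) \<and>
        (\<forall>k\<ge>3. \<forall>x\<ge>0. \<bar>D k x\<bar> \<le>
            c * (c/\<epsilon>)^k * real k ^ k * ln (real k) powr (real k * (1 + \<epsilon>))) \<and>
        (\<forall>k\<in>{1,2}. \<forall>x\<ge>0. \<bar>D k x\<bar> \<le> c * (c/\<epsilon>)^k * real k ^ k) \<and>
        (\<forall>k\<ge>1. D k 1 = 0)))"
proof (intro exI[of _ 1024] conjI allI impI)
  fix \<epsilon> :: real and ty
  assume \<epsilon>: "0 < \<epsilon> \<and> \<epsilon> \<le> 1"
  have "tower (Suc 0) \<le> real 3"
    using exp_le by (simp add: tower_def)
  with \<epsilon> obtain f D where "bounded_cutoff ty f D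
      (\<lambda>k. (64 * real (Suc 3) / \<epsilon> * real k * log_weight 0 \<epsilon> (real (k + 3))) ^ k)"
    using exists_log_cutoff by blast
  then have "smooth_derivs_nonneg f D" "admissible ty f" "\<forall>x\<ge>0. 0 \<le> f x \<and> f x \<le> 1" "\<forall>k\<ge>1. D k 1 = 0"
    and bound: "\<And>k x. 1 \<le> k \<Longrightarrow> 0 \<le> x \<Longrightarrow>
      \<bar>D k x\<bar> \<le> (64 * real (Suc 3) / \<epsilon> * real k * log_weight 0 \<epsilon> (real (k + 3))) ^ k"
    unfolding bounded_cutoff_def by auto
  moreover have "\<bar>D k x\<bar> \<le> 1024 * (1024 / \<epsilon>) ^ k * real k ^ k" if "k \<in> {1, 2}" "0 \<le> x" for k x
    using that \<epsilon> by (intro order_trans[OF bound ln_cutoff_bound_le_small]) auto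
  ultimately show "\<exists>f D. smooth_derivs_nonneg f D \<and> admissible ty f \<and>
      (\<forall>x\<ge>0. 0 \<le> f x \<and> f x \<le> 1) \<and>
      (\<forall>k\<ge>3. \<forall>x\<ge>0. \<bar>D k x\<bar> \<le>
          1024 * (1024 / \<epsilon>) ^ k * real k ^ k * ln (real k) powr (real k * (1 + \<epsilon>))) \<and>
      (\<forall>k\<in>{1,2}. \<forall>x\<ge>0. \<bar>D k x\<bar> \<le> 1024 * (1024 / \<epsilon>) ^ k * real k ^ k) \<and>
      (\<forall>k\<ge>1. D k 1 = 0)"
    using \<epsilon> by (intro exI[of _ f] exI[of _ D] conjI allI impI ballI)
      (auto intro: order_trans[OF bound ln_cutoff_bound_le])
qed simp

lemma cutoff_iterated_log_bound:
  "\<exists>c::real. \<exists>K::nat. c > 1 \<and>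
     (\<forall>\<epsilon>::real. 0 < \<epsilon> \<and> \<epsilon> \<le> 1 \<longrightarrow> (\<forall>ty. \<exists>f D.
        smooth_derivs_nonneg f D \<and> admissible ty f \<and>
        (\<forall>k\<ge>K. \<forall>x\<ge>0. \<bar>D k x\<bar> \<le>
            c * (c/\<epsilon>)^k * real k ^ k *
            (\<Prod>j\<in>{1..l}. ((ln ^^ j) (real k)) ^ k) *
            ((ln ^^ (Suc l)) (real k)) powr (real k * (1 + \<epsilon>)))))"
proof -
  define N where "N = nat \<lceil>tower (Suc l)\<rceil>"
  have N: "tower (Suc l) \<le> real N"
    unfolding N_def by (rule real_nat_ceiling_ge)
  have "\<forall>\<^sub>F x in at_top. \<forall>i\<in>{..Suc l}. (ln ^^ i) (2 * x :: real) \<le> 2 * (ln ^^ i) x"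
    by (intro eventually_ball_finite ballI eventually_iterated_ln_double) simp
  then obtain K0 :: real where K0: "\<And>x i. x \<ge> K0 \<Longrightarrow> i \<le> Suc l \<Longrightarrow> (ln ^^ i) (2 * x) \<le> 2 * (ln ^^ i) x"
    unfolding eventually_at_top_linorder by auto
  define K where "K = max (nat \<lceil>K0\<rceil>) (Suc N)"
  define c where "c = 2 ^ (l + 8) * real (Suc N)"
  have "(1::real) < 2 ^ (l + 8)"
    by simp
  then have "1 < c"
    unfolding c_def by (rule less_le_trans) simp
  show ?thesis
  proof (intro exI[of _ c] exI[of _ K] conjI allI impI \<open>1 < c\<close>)
    fix \<epsilon> :: real and ty
    assume \<epsilon>: "0 < \<epsilon> \<and> \<epsilon> \<le> 1"
    obtain f D where cutoff: "bounded_cutoff ty f D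
        (\<lambda>k. (64 * real (Suc N) / \<epsilon> * real k * log_weight l \<epsilon> (real (k + N))) ^ k)"
      using exists_log_cutoff[OF N] \<epsilon> by blast
    then have "smooth_derivs_nonneg f D" "admissible ty f" and bound: "\<And>k x. 1 \<le> k \<Longrightarrow> 0 \<le> x \<Longrightarrow>
        \<bar>D k x\<bar> \<le> (64 * real (Suc N) / \<epsilon> * real k * log_weight l \<epsilon> (real (k + N))) ^ k"
      unfolding bounded_cutoff_def by auto
    moreover have "(64 * real (Suc N) / \<epsilon> * real k * log_weight l \<epsilon> (real (k + N))) ^ k
        \<le> c * (c / \<epsilon>) ^ k * real k ^ k * (\<Prod>j\<in>{1..l}. ((ln ^^ j) (real k)) ^ k) *
          (ln ^^ Suc l) (real k) powr (real k * (1 + \<epsilon>))" if "k \<ge> K" for k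
      unfolding c_def using that N \<epsilon>
      by (intro log_cutoff_bound_le K0) (auto simp: K_def nat_le_iff ceiling_le_iff)
    moreover have "k \<ge> K \<Longrightarrow> k \<ge> 1" for k
      by (simp add: K_def)
    ultimately show "\<exists>f D. smooth_derivs_nonneg f D \<and> admissible ty f \<and>
        (\<forall>k\<ge>K. \<forall>x\<ge>0. \<bar>D k x\<bar> \<le> c * (c / \<epsilon>) ^ k * real k ^ k *
          (\<Prod>j\<in>{1..l}. ((ln ^^ j) (real k)) ^ k) * (ln ^^ Suc l) (real k) powr (real k * (1 + \<epsilon>)))"
      by (intro exI[of _ f] exI[of _ D] conjI allI impI) (auto intro: order_trans[OF bound])
  qed
qed

theorem theorem3p1:
  shows "(\<exists>c::real. c > 1 \<and>
     (\<forall>\<epsilon>::real. 0 < \<epsilon> \<and> \<epsilon> \<le> 1 \<longrightarrow> (\<forall>ty. \<exists>f D.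
        smooth_derivs_nonneg f D \<and> admissible ty f \<and>
        (\<forall>x\<ge>0. 0 \<le> f x \<and> f x \<le> 1) \<and>
        (\<forall>k\<ge>3. \<forall>x\<ge>0. \<bar>D k x\<bar> \<le>
            c * (c/\<epsilon>)^k * real k ^ k * ln (real k) powr (real k * (1 + \<epsilon>))) \<and>
        (\<forall>k\<in>{1,2}. \<forall>x\<ge>0. \<bar>D k x\<bar> \<le> c * (c/\<epsilon>)^k * real k ^ k) \<and>
        (\<forall>k\<ge>1. D k 1 = 0))))
   \<and>
   (\<forall>l::nat. l \<ge> 1 \<longrightarrow> (\<exists>c::real. \<exists>K::nat. c > 1 \<and>
     (\<forall>\<epsilon>::real. 0 < \<epsilon> \<and> \<epsilon> \<le> 1 \<longrightarrow> (\<forall>ty. \<exists>f D.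
        smooth_derivs_nonneg f D \<and> admissible ty f \<and>
        (\<forall>k\<ge>K. \<forall>x\<ge>0. \<bar>D k x\<bar> \<le>
            c * (c/\<epsilon>)^k * real k ^ k *
            (\<Prod>j\<in>{1..l}. ((ln ^^ j) (real k)) ^ k) *
            ((ln ^^ (Suc l)) (real k)) powr (real k * (1 + \<epsilon>)))))))"
  by (intro conjI allI impI cutoff_log_bound cutoff_iterated_log_bound)
end
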